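(* Let $n=m+1$, $m\ge2$, and let $\Phi(x)=|x_h|^4+4x_v^2$ for $x=(x_h,x_v)\in\mathbb R^m\times\mathbb R$. For constants $c,r\in\mathbb R$ let $u(x,t)=ct-\Phi(x)+r$. Then at every point with $x_h\ne0$, $$u_t-\operatorname{tr}\Big(X^2u-\frac{X^2u\,Xu\otimes Xu}{|Xu|^2}\Big)=c+4n|x_h|^2 .$$ Consequently: (i) if $c\ge0$, $u$ is a viscosity supersolution of the horizontal mean curvature flow equation in $\mathbb R^n\times(0,+\infty)$; (ii) if $c<0$, $u$ is a viscosity subsolution of that equation in the open set $\{(x,t):|x_h|<\sqrt{-c/(4n)},\ t>0\}$.
   Context: Heisenberg-like group: $\mathbb R^n=\mathbb R^m\times\mathbb R$, $x=(x_h,x_v)$, with a single $m\times m$ matrix $B$ satisfying ${}^tB=-B=B^{-1}$. Let $\sigma(x)$ be the $n\times m$ matrix with first $m$ rows $I_m$ and last row ${}^t(Bx_h)$; vector fields $X_j=\sum_i\sigma_{ij}(x)\partial_i$. For $u\in C^2$, $Xu=\nabla u\,\sigma(x)$ and $X^2u={}^t\sigma(x)D^2u\,\sigma(x)$ (derivatives in $x$ only). Horizontal mean curvature flow equation: $u_t+F(Xu,X^2u)=0$ with $F(q,A)=-\operatorname{tr}[(I_m-\frac{q}{|q|}\otimes\frac{q}{|q|})A]$, $q\ne0$. Viscosity sub/supersolutions on an open set $\mathcal O\subset\mathbb R^n\times(0,\infty)$: an upper (lower) semicontinuous $u$ is a subsolution (supersolution) if for every $\phi\in C^2$ and every local maximum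 (minimum) point $(x,t)\in\mathcal O$ of $u-\phi$, $\phi_t+G_*(x,t,\nabla\phi,D^2\phi)\le0$ (resp. $\phi_t+G^*(x,t,\nabla\phi,D^2\phi)\ge0$), where $G(x,t,p,A)=F(p\sigma(x),{}^t\sigma(x)A\sigma(x))$ for $p\sigma(x)\ne0$ and $G_*,G^*$ are its lower/upper semicontinuous envelopes on all of $\mathbb R^n\times(0,\infty)\times\mathbb R^n\times\mathcal S^n$. *)

theory Defs
  imports "HOL-Analysis.Analysis"
begin

text \<open>Spatial points of R^n = R^m x R are vectors indexed by the type 'm option:
  index Some i (i :: 'm) is the horizontal coordinate i, index None is the vertical
  coordinate. Thus n = CARD('m option) = CARD('m) + 1. Space-time functions are
  curried: u x t.\<close>

definition hpart :: "real^('m::finite option) \<Rightarrow> real^'m" where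
  "hpart x = (\<chi> i. x $ Some i)"

definition vpart :: "real^('m::finite option) \<Rightarrow> real" where
  "vpart x = x $ None"

definition sigma :: "real^'m^'m \<Rightarrow> real^('m::finite option) \<Rightarrow> real^'m^('m option)" where
  "sigma B x = (\<chi> k j. case k of Some i \<Rightarrow> (if i = j then 1 else 0)
                                | None \<Rightarrow> (B *v hpart x) $ j)"

definition outer :: "real^'k \<Rightarrow> real^'k^'k" where
  "outer q = (\<chi> i j. q $ i * q $ j)"

definition dtime :: "(real^'n \<Rightarrow> real \<Rightarrow> real) \<Rightarrow> real^'n \<Rightarrow> real \<Rightarrow> real" where
  "dtime u x t = deriv (\<lambda>s. u x s) t"

definition grad :: "(real^'n \<Rightarrow> real \<Rightarrow> real) \<Rightarrow> real^'n \<Rightarrow> real \<Rightarrow> real^'n" where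
  "grad u x t = (\<chi> i. deriv (\<lambda>s. u (x + s *\<^sub>R axis i 1) t) 0)"

definition hess :: "(real^'n \<Rightarrow> real \<Rightarrow> real) \<Rightarrow> real^'n \<Rightarrow> real \<Rightarrow> real^'n^'n" where
  "hess u x t = (\<chi> i j. deriv (\<lambda>s. grad u (x + s *\<^sub>R axis j 1) t $ i) 0)"

definition Xh :: "real^'m^'m \<Rightarrow> (real^('m::finite option) \<Rightarrow> real \<Rightarrow> real) \<Rightarrow> real^('m option) \<Rightarrow> real \<Rightarrow> real^'m" where
  "Xh B u x t = grad u x t v* sigma B x"

definition X2h :: "real^'m^'m \<Rightarrow> (real^('m::finite option) \<Rightarrow> real \<Rightarrow> real) \<Rightarrow> real^('m option) \<Rightarrow> real \<Rightarrow> real^'m^'m" where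
  "X2h B u x t = transpose (sigma B x) ** hess u x t ** sigma B x"

definition Fmc :: "real^'m \<Rightarrow> real^'m^'m \<Rightarrow> real" where
  "Fmc q A = - trace ((mat 1 - outer (q /\<^sub>R norm q)) ** A)"

type_synonym 'm jet = "(real^('m option)) \<times> real \<times> (real^('m option)) \<times> (real^('m option)^('m option))"

definition Gdom :: "real^'m^'m \<Rightarrow> ('m::finite) jet set" where
  "Gdom B = {(x, t, p, A). 0 < t \<and> p v* sigma B x \<noteq> 0 \<and> transpose A = A}"

definition Gop :: "real^'m^'m \<Rightarrow> ('m::finite) jet \<Rightarrow> real" where
  "Gop B z = (case z of (x, t, p, A) \<Rightarrow>
      Fmc (p v* sigma B x) (transpose (sigma B x) ** A ** sigma B x))"

definition G_lower :: "real^'m^'m \<Rightarrow> ('m::finite) jet \<Rightarrow> real" where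
  "G_lower B z = (SUP e\<in>{0<..}. INF w\<in>{w \<in> Gdom B. dist w z < e}. Gop B w)"

definition G_upper :: "real^'m^'m \<Rightarrow> ('m::finite) jet \<Rightarrow> real" where
  "G_upper B z = (INF e\<in>{0<..}. SUP w\<in>{w \<in> Gdom B. dist w z < e}. Gop B w)"

definition C2_on :: "((real^'n) \<times> real) set \<Rightarrow> (real^'n \<Rightarrow> real \<Rightarrow> real) \<Rightarrow> bool" where
  "C2_on S \<phi> \<longleftrightarrow> (\<exists>D D2. (\<forall>z\<in>S. ((\<lambda>(y, s). \<phi> y s) has_derivative blinfun_apply (D z)) (at z))
       \<and> (\<forall>z\<in>S. (D has_derivative blinfun_apply (D2 z)) (at z))
       \<and> continuous_on S D2)"

definition usc_on :: "((real^'n) \<times> real) set \<Rightarrow> (real^'n \<Rightarrow> real \<Rightarrow> real) \<Rightarrow> bool" where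
  "usc_on S u \<longleftrightarrow> (\<forall>z\<in>S. \<forall>a. (\<lambda>(y, s). u y s) z < a \<longrightarrow>
      eventually (\<lambda>w. (\<lambda>(y, s). u y s) w < a) (at z within S))"

definition lsc_on :: "((real^'n) \<times> real) set \<Rightarrow> (real^'n \<Rightarrow> real \<Rightarrow> real) \<Rightarrow> bool" where
  "lsc_on S u \<longleftrightarrow> (\<forall>z\<in>S. \<forall>a. a < (\<lambda>(y, s). u y s) z \<longrightarrow>
      eventually (\<lambda>w. a < (\<lambda>(y, s). u y s) w) (at z within S))"

definition local_max_on :: "('a::metric_space) set \<Rightarrow> ('a \<Rightarrow> real) \<Rightarrow> 'a \<Rightarrow> bool" where
  "local_max_on S f z \<longleftrightarrow> (\<exists>e>0. \<forall>w\<in>S. dist w z < e \<longrightarrow> f w \<le> f z)"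

definition local_min_on :: "('a::metric_space) set \<Rightarrow> ('a \<Rightarrow> real) \<Rightarrow> 'a \<Rightarrow> bool" where
  "local_min_on S f z \<longleftrightarrow> (\<exists>e>0. \<forall>w\<in>S. dist w z < e \<longrightarrow> f z \<le> f w)"

definition visc_sub :: "real^'m^'m \<Rightarrow> (real^('m::finite option) \<Rightarrow> real \<Rightarrow> real) \<Rightarrow> ((real^('m option)) \<times> real) set \<Rightarrow> bool" where
  "visc_sub B u S \<longleftrightarrow> usc_on S u \<and>
     (\<forall>\<phi> x t. C2_on S \<phi> \<and> (x, t) \<in> S \<and> local_max_on S (\<lambda>(y, s). u y s - \<phi> y s) (x, t)
        \<longrightarrow> dtime \<phi> x t + G_lower B (x, t, grad \<phi> x t, hess \<phi> x t) \<le> 0)"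

definition visc_super :: "real^'m^'m \<Rightarrow> (real^('m::finite option) \<Rightarrow> real \<Rightarrow> real) \<Rightarrow> ((real^('m option)) \<times> real) set \<Rightarrow> bool" where
  "visc_super B u S \<longleftrightarrow> lsc_on S u \<and>
     (\<forall>\<phi> x t. C2_on S \<phi> \<and> (x, t) \<in> S \<and> local_min_on S (\<lambda>(y, s). u y s - \<phi> y s) (x, t)
        \<longrightarrow> dtime \<phi> x t + G_upper B (x, t, grad \<phi> x t, hess \<phi> x t) \<ge> 0)"

end

theory Submission
  imports Defs
begin

text \<open>
  Write \<open>a = x\<^sub>h\<close> and \<open>b = B a\<close>. Since \<open>B\<close> is skew with \<open>B\<^sup>-\<^sup>1 = -B\<close>, \<open>b\<close> is orthogonal
  to \<open>a\<close> and has the same length. Then \<open>Xu = -(4|a|\<^sup>2 a + 8 x\<^sub>v b)\<close> and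
  \<open>X\<^sup>2u = -(8 a\<otimes>a + 4|a|\<^sup>2 I + 8 b\<otimes>b)\<close>, so the projection term of the mean curvature
  operator contributes exactly \<open>-12|a|\<^sup>2\<close> and \<open>F(Xu, X\<^sup>2u) = 4(m+1)|a|\<^sup>2\<close>.

  A \<open>C\<^sup>2\<close> test function touching \<open>u\<close> at \<open>(x,t)\<close> has time derivative \<open>c\<close>, and its
  (symmetric, by Schwarz's theorem) Hessian is ordered against that of \<open>u\<close>. As \<open>F\<close> is
  antimonotone in the matrix, touching from below gives \<open>G \<ge> 0\<close> because \<open>X\<^sup>2u \<le> 0\<close>, and
  touching from above gives \<open>G \<le> 4(m+1)|x\<^sub>h|\<^sup>2 < -c\<close>. Where the horizontal gradient
  vanishes, the envelopes of \<open>G\<close> are reached through nearby gradients \<open>p\<close> with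
  \<open>p \<sigma>(x) \<noteq> 0\<close>, which exist because the horizontal rows of \<open>\<sigma>(x)\<close> form the identity.
\<close>

section \<open>Directional derivatives and second-order conditions\<close>

lemma has_real_derivative_along_line:
  fixes f :: "'a::real_normed_vector \<Rightarrow> real"
  assumes "(f has_derivative f') (at (x + \<tau> *\<^sub>R h))"
  shows "((\<lambda>s. f (x + s *\<^sub>R h)) has_real_derivative f' h) (at \<tau>)"
proof -
  have "((\<lambda>s. x + s *\<^sub>R h) has_derivative (\<lambda>s. s *\<^sub>R h)) (at \<tau>)"
    by (auto intro!: derivative_eq_intros)
  from has_derivative_compose[OF this assms]
  have "((\<lambda>s. f (x + s *\<^sub>R h)) has_derivative (\<lambda>s. f' (s *\<^sub>R h))) (at \<tau>)" .
  moreover have "(\<lambda>s. f' (s *\<^sub>R h)) = (*) (f' h)"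
    using linear_scale[OF has_derivative_linear[OF assms]] by (auto simp: fun_eq_iff)
  ultimately show ?thesis by (simp add: has_field_derivative_def)
qed

lemma deriv_along_line:
  fixes f :: "'a::real_normed_vector \<Rightarrow> real"
  assumes "(f has_derivative f') (at x)"
  shows "deriv (\<lambda>s. f (x + s *\<^sub>R h)) 0 = f' h"
  using has_real_derivative_along_line[of f f' x 0 h] assms by (simp add: DERIV_imp_deriv)

lemma DERIV_local_min_second:
  fixes g :: "real \<Rightarrow> real"
  assumes "r > 0" "\<And>s. \<bar>s\<bar> < r \<Longrightarrow> (g has_real_derivative g' s) (at s)"
    and "(g' has_real_derivative a) (at 0)"
    and "eventually (\<lambda>s. g 0 \<le> g s) (nhds 0)"
  shows "0 \<le> a"
proof (rule ccontr)
  assume "\<not> 0 \<le> a"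
  obtain d where d: "d > 0" "\<And>s. \<bar>s\<bar> < d \<Longrightarrow> g 0 \<le> g s"
    using assms(4) unfolding eventually_nhds_metric dist_real_def by auto
  have "g' 0 = 0"
    by (rule DERIV_local_min[OF assms(2) d(1)]) (use assms(1) d(2) in auto)
  obtain d' where d': "d' > 0" "\<And>s. 0 < s \<Longrightarrow> s < d' \<Longrightarrow> g' s < g' 0"
    using DERIV_neg_dec_right[OF assms(3)] \<open>\<not> 0 \<le> a\<close> by auto
  define s where "s = min r (min d d') / 2"
  have s: "0 < s" "s < r" "s < d" "s < d'" using assms(1) d(1) d'(1) by (auto simp: s_def)
  obtain \<theta> where \<theta>: "0 < \<theta>" "\<theta> < s" and mvt: "g s - g 0 = (s - 0) * g' \<theta>"
    using MVT2[of 0 s g g'] s assms(2) by auto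
  have "g' \<theta> < 0" using d'(2)[of \<theta>] \<theta> s(4) \<open>g' 0 = 0\<close> by linarith
  then have "s * g' \<theta> < 0" by (rule mult_pos_neg[OF s(1)])
  then have "g s < g 0" using mvt by simp
  then show False using d(2)[of s] s by simp
qed

lemma local_min_second_derivative_nonneg:
  fixes f :: "'a::real_normed_vector \<Rightarrow> real"
  assumes "open U" "x \<in> U" "\<And>y. y \<in> U \<Longrightarrow> (f has_derivative f' y) (at y)"
    and "((\<lambda>y. f' y w) has_derivative (\<lambda>v. f'' v w)) (at x)"
    and "eventually (\<lambda>y. f x \<le> f y) (nhds x)"
  shows "0 \<le> f'' w w"
proof -
  obtain r where r: "r > 0" "ball x r \<subseteq> U" using assms(1,2) open_contains_ball by blast
  define r' where "r' = r / (norm w + 1)"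
  have "r' > 0" using r by (simp add: r'_def add_nonneg_pos)
  moreover have "((\<lambda>s. f (x + s *\<^sub>R w)) has_real_derivative f' (x + s *\<^sub>R w) w) (at s)"
    if "\<bar>s\<bar> < r'" for s
  proof -
    have "\<bar>s\<bar> * (norm w + 1) < r"
      using that by (simp add: r'_def pos_less_divide_eq add_nonneg_pos)
    then have "norm (s *\<^sub>R w) < r" by (simp add: algebra_simps)
    then have "x + s *\<^sub>R w \<in> U" using r by (auto simp: dist_norm)
    then show ?thesis by (intro has_real_derivative_along_line assms(3))
  qed
  moreover have "((\<lambda>s. f' (x + s *\<^sub>R w) w) has_real_derivative f'' w w) (at 0)"
    using has_real_derivative_along_line[of "\<lambda>y. f' y w" _ x 0 w] assms(4) by simp
  moreover have "((\<lambda>s. x + s *\<^sub>R w) \<longlongrightarrow> x + 0 *\<^sub>R w) (nhds 0)"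
    unfolding tendsto_at_iff_tendsto_nhds[symmetric] by (intro tendsto_intros filterlim_ident)
  then have "eventually (\<lambda>s. f x \<le> f (x + s *\<^sub>R w)) (nhds 0)"
    using assms(5) filterlim_iff by fastforce
  ultimately show ?thesis
    by (intro DERIV_local_min_second[where g="\<lambda>s. f (x + s *\<^sub>R w)" and g'="\<lambda>s. f' (x + s *\<^sub>R w) w"]) auto
qed

definition second_difference :: "('a::real_vector \<Rightarrow> real) \<Rightarrow> 'a \<Rightarrow> 'a \<Rightarrow> 'a \<Rightarrow> real \<Rightarrow> real" where
  "second_difference f x h k s = f (x + s *\<^sub>R h + s *\<^sub>R k) - f (x + s *\<^sub>R h) - f (x + s *\<^sub>R k) + f x"

lemma second_difference_commute: "second_difference f x h k s = second_difference f x k h s"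
  by (simp add: second_difference_def add_ac)

lemma second_difference_mean_value:
  fixes f :: "'a::real_normed_vector \<Rightarrow> real"
  assumes "\<And>y. y \<in> ball x r \<Longrightarrow> (f has_derivative f' y) (at y)"
    and "0 < s" "s * (norm h + norm k) < r"
  obtains \<theta> where "0 < \<theta>" "\<theta> < s"
    "second_difference f x h k s = s * (f' (x + s *\<^sub>R k + \<theta> *\<^sub>R h) h - f' (x + \<theta> *\<^sub>R h) h)"
proof -
  have in_ball: "x + \<sigma> *\<^sub>R k + \<tau> *\<^sub>R h \<in> ball x r" if "0 \<le> \<tau>" "\<tau> \<le> s" "0 \<le> \<sigma>" "\<sigma> \<le> s" for \<tau> \<sigma>
  proof -
    have "norm (\<sigma> *\<^sub>R k + \<tau> *\<^sub>R h) \<le> \<sigma> * norm k + \<tau> * norm h"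
      using norm_triangle_ineq[of "\<sigma> *\<^sub>R k" "\<tau> *\<^sub>R h"] that by simp
    also have "\<dots> \<le> s * (norm h + norm k)"
      using mult_right_mono[OF that(4), of "norm k"] mult_right_mono[OF that(2), of "norm h"]
      by (simp add: distrib_left)
    finally have "dist x (x + (\<sigma> *\<^sub>R k + \<tau> *\<^sub>R h)) < r"
      using assms(3) by (simp add: dist_norm norm_minus_commute add.commute)
    then show ?thesis by (simp add: add.assoc)
  qed
  define g where "g \<tau> = f (x + s *\<^sub>R k + \<tau> *\<^sub>R h) - f (x + \<tau> *\<^sub>R h)" for \<tau>
  have "(g has_real_derivative f' (x + s *\<^sub>R k + \<tau> *\<^sub>R h) h - f' (x + \<tau> *\<^sub>R h) h) (at \<tau>)"
    if "0 \<le> \<tau>" "\<tau> \<le> s" for \<tau>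
    unfolding g_def using in_ball[OF that, of s] in_ball[OF that, of 0] assms(2)
    by (intro DERIV_diff has_real_derivative_along_line assms(1)) auto
  from MVT2[OF assms(2) this] obtain \<theta> where "0 < \<theta>" "\<theta> < s"
      "g s - g 0 = (s - 0) * (f' (x + s *\<^sub>R k + \<theta> *\<^sub>R h) h - f' (x + \<theta> *\<^sub>R h) h)"
    by blast
  moreover have "g s - g 0 = second_difference f x h k s"
    by (simp add: g_def second_difference_def add_ac)
  ultimately show ?thesis using that by simp
qed

lemma linear_difference_estimate:
  fixes g :: "'a::real_normed_vector \<Rightarrow> real"
  assumes "linear L" "\<And>y. norm (y - x) \<le> \<rho> \<Longrightarrow> \<bar>g y - g x - L (y - x)\<bar> \<le> \<epsilon> * \<rho>"
    and "norm (y1 - x) \<le> \<rho>" "norm (y2 - x) \<le> \<rho>"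
  shows "\<bar>g y1 - g y2 - L (y1 - y2)\<bar> \<le> 2 * \<epsilon> * \<rho>"
proof -
  have "L (y1 - y2) = L (y1 - x) - L (y2 - x)"
    using linear_diff[OF assms(1), of "y1 - x" "y2 - x"] by simp
  then show ?thesis using assms(2)[OF assms(3)] assms(2)[OF assms(4)] unfolding abs_le_iff by linarith
qed

lemma second_difference_estimate:
  fixes f :: "'a::real_normed_vector \<Rightarrow> real"
  assumes "open U" "x \<in> U" "\<And>y. y \<in> U \<Longrightarrow> (f has_derivative f' y) (at y)"
    and "((\<lambda>y. f' y h) has_derivative (\<lambda>v. f'' v h)) (at x)" and "\<epsilon> > 0"
  shows "eventually (\<lambda>s. \<bar>second_difference f x h k s - s\<^sup>2 * f'' k h\<bar> \<le> \<epsilon> * s\<^sup>2) (at_right 0)"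
proof -
  obtain r where r: "r > 0" "ball x r \<subseteq> U" using assms(1,2) open_contains_ball by blast
  define M where "M = norm h + norm k"
  define \<epsilon>' where "\<epsilon>' = \<epsilon> / (2 * (M + 1))"
  have M: "0 \<le> M" by (simp add: M_def)
  have "\<epsilon>' > 0" using assms(5) M by (simp add: \<epsilon>'_def)
  then obtain \<delta> where \<delta>: "\<delta> > 0" "\<And>y. norm (y - x) < \<delta> \<Longrightarrow>
       \<bar>f' y h - f' x h - f'' (y - x) h\<bar> \<le> \<epsilon>' * norm (y - x)"
    using assms(4) unfolding has_derivative_at_alt by force
  have lin: "linear (\<lambda>v. f'' v h)" using assms(4) has_derivative_linear by blast
  have "\<bar>second_difference f x h k s - s\<^sup>2 * f'' k h\<bar> \<le> \<epsilon> * s\<^sup>2"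
    if s: "0 < s" "s < min r \<delta> / (M + 1)" for s
  proof -
    have "s * (M + 1) < min r \<delta>" using s(2) M by (simp add: pos_less_divide_eq)
    then have "s * M < min r \<delta>" using s(1) by (simp add: algebra_simps)
    moreover have "\<And>y. y \<in> ball x r \<Longrightarrow> (f has_derivative f' y) (at y)" using r(2) assms(3) by blast
    ultimately obtain \<theta> where \<theta>: "0 < \<theta>" "\<theta> < s" and mvt:
      "second_difference f x h k s = s * (f' (x + s *\<^sub>R k + \<theta> *\<^sub>R h) h - f' (x + \<theta> *\<^sub>R h) h)"
      using second_difference_mean_value[of x r f f' s h k] s(1) by (auto simp: M_def)
    define y1 where "y1 = x + s *\<^sub>R k + \<theta> *\<^sub>R h"
    define y2 where "y2 = x + \<theta> *\<^sub>R h"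
    have "\<theta> * norm h \<le> s * norm h" using \<theta> by (simp add: mult_right_mono)
    moreover have "0 \<le> s * norm k" using s(1) by simp
    ultimately have near: "norm (y1 - x) \<le> s * M" "norm (y2 - x) \<le> s * M"
      using norm_triangle_ineq[of "s *\<^sub>R k" "\<theta> *\<^sub>R h"] \<theta>(1)
      by (simp_all add: y1_def y2_def M_def algebra_simps)
    have "\<bar>f' y h - f' x h - f'' (y - x) h\<bar> \<le> \<epsilon>' * (s * M)" if "norm (y - x) \<le> s * M" for y
      using \<delta>(2)[of y] that \<open>s * M < min r \<delta>\<close> mult_left_mono[OF that, of \<epsilon>'] \<open>\<epsilon>' > 0\<close>
      by linarith
    from linear_difference_estimate[OF lin this near]
    have "\<bar>f' y1 h - f' y2 h - f'' (y1 - y2) h\<bar> \<le> 2 * \<epsilon>' * (s * M)" .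
    moreover have "f'' (y1 - y2) h = s * f'' k h"
      using linear_scale[OF lin, of s k] by (simp add: y1_def y2_def)
    moreover have "2 * \<epsilon>' * (s * M) \<le> \<epsilon> * s"
    proof -
      have "2 * \<epsilon>' * M \<le> \<epsilon>" using assms(5) M by (simp add: \<epsilon>'_def field_simps)
      from mult_left_mono[OF this, of s] s(1) show ?thesis by (simp add: algebra_simps)
    qed
    ultimately have "\<bar>f' y1 h - f' y2 h - s * f'' k h\<bar> \<le> \<epsilon> * s" by linarith
    then have "s * \<bar>f' y1 h - f' y2 h - s * f'' k h\<bar> \<le> \<epsilon> * s\<^sup>2"
      using mult_left_mono[of _ _ s] s(1) by (fastforce simp: power2_eq_square mult_ac)
    moreover have "second_difference f x h k s - s\<^sup>2 * f'' k h = s * (f' y1 h - f' y2 h - s * f'' k h)"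
      by (simp add: mvt y1_def y2_def power2_eq_square algebra_simps)
    ultimately show ?thesis using s(1) by (simp add: abs_mult)
  qed
  moreover have "min r \<delta> / (M + 1) > 0" using r \<delta> M by simp
  ultimately show ?thesis unfolding eventually_at_right_field by auto
qed

lemma second_derivative_symmetric:
  fixes f :: "'a::real_normed_vector \<Rightarrow> real"
  assumes "open U" "x \<in> U" "\<And>y. y \<in> U \<Longrightarrow> (f has_derivative f' y) (at y)"
    and "\<And>v. ((\<lambda>y. f' y v) has_derivative (\<lambda>w. f'' w v)) (at x)"
  shows "f'' k h = f'' h k"
proof (rule ccontr)
  define D where "D = \<bar>f'' k h - f'' h k\<bar>"
  assume "f'' k h \<noteq> f'' h k"
  then have "D / 4 > 0" by (simp add: D_def)
  have "eventually (\<lambda>s. \<bar>second_difference f x h k s - s\<^sup>2 * f'' k h\<bar> \<le> D / 4 * s\<^sup>2) (at_right 0)"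
    by (rule second_difference_estimate[OF assms(1-3) assms(4) \<open>D / 4 > 0\<close>])
  moreover have "eventually (\<lambda>s. \<bar>second_difference f x k h s - s\<^sup>2 * f'' h k\<bar> \<le> D / 4 * s\<^sup>2) (at_right 0)"
    by (rule second_difference_estimate[OF assms(1-3) assms(4) \<open>D / 4 > 0\<close>])
  moreover have "eventually (\<lambda>s. 0 < s) (at_right (0::real))" by (rule eventually_at_right_less)
  ultimately have "eventually (\<lambda>s. 0 < s \<and> \<bar>second_difference f x h k s - s\<^sup>2 * f'' k h\<bar> \<le> D / 4 * s\<^sup>2
      \<and> \<bar>second_difference f x h k s - s\<^sup>2 * f'' h k\<bar> \<le> D / 4 * s\<^sup>2) (at_right 0)"
    by eventually_elim (auto simp: second_difference_commute[of f x k h])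
  then obtain s where s: "0 < s" "\<bar>second_difference f x h k s - s\<^sup>2 * f'' k h\<bar> \<le> D / 4 * s\<^sup>2"
      "\<bar>second_difference f x h k s - s\<^sup>2 * f'' h k\<bar> \<le> D / 4 * s\<^sup>2"
    using eventually_happens[of _ "at_right (0::real)"] by auto
  define \<Delta> where "\<Delta> = second_difference f x h k s"
  have "s\<^sup>2 * D = \<bar>(\<Delta> - s\<^sup>2 * f'' h k) - (\<Delta> - s\<^sup>2 * f'' k h)\<bar>"
    by (simp add: D_def abs_mult flip: right_diff_distrib)
  also have "\<dots> \<le> D / 4 * s\<^sup>2 + D / 4 * s\<^sup>2"
    using abs_triangle_ineq4[of "\<Delta> - s\<^sup>2 * f'' h k" "\<Delta> - s\<^sup>2 * f'' k h"] s(2,3) unfolding \<Delta>_def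
    by linarith
  also have "\<dots> = s\<^sup>2 * (D / 2)" by simp
  finally show False using s(1) \<open>D / 4 > 0\<close> by simp
qed

section \<open>Matrices of bilinear forms and the operator F\<close>

lemma linear_axis_expansion:
  fixes L :: "real^'n \<Rightarrow> real"
  assumes "linear L"
  shows "L v = (\<Sum>k\<in>UNIV. v $ k * L (axis k 1))"
proof -
  have "L v = L (\<Sum>k\<in>UNIV. v $ k *\<^sub>R axis k 1)"
    using basis_expansion[of v] by (simp add: scalar_mult_eq_scaleR)
  also have "\<dots> = (\<Sum>k\<in>UNIV. v $ k * L (axis k 1))"
    by (simp add: linear_sum[OF assms] linear_scale[OF assms])
  finally show ?thesis .
qed

lemma vector_matrix_mult_linear_axis:
  fixes L :: "real^'n \<Rightarrow> real" and S :: "real^'m^'n"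
  assumes "linear L"
  shows "(\<chi> k. L (axis k 1)) v* S = (\<chi> j. L (column j S))"
proof -
  have "((\<chi> k. L (axis k 1)) v* S) $ j = L (column j S)" for j
    unfolding linear_axis_expansion[OF assms, of "column j S"]
    by (simp add: vector_matrix_mult_def column_def mult.commute)
  then show ?thesis by (simp add: vec_eq_iff)
qed

text \<open>Entry \<open>(i, j)\<close> is \<open>Q e\<^sub>j e\<^sub>i\<close>, matching \<open>hess\<close>, whose entry \<open>(i, j)\<close> differentiates
  the \<open>i\<close>-th partial derivative in direction \<open>j\<close>.\<close>

definition bilinear_matrix :: "(real^'n \<Rightarrow> real^'n \<Rightarrow> real) \<Rightarrow> real^'n^'n" where
  "bilinear_matrix Q = (\<chi> i j. Q (axis j 1) (axis i 1))"

lemma bilinear_axis_expansion: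
  fixes Q :: "real^'n \<Rightarrow> real^'n \<Rightarrow> real"
  assumes "bilinear Q"
  shows "Q w v = (\<Sum>l\<in>UNIV. \<Sum>k\<in>UNIV. w $ l * v $ k * Q (axis l 1) (axis k 1))"
proof -
  have lin: "linear (\<lambda>v. Q w v)" "linear (\<lambda>w. Q w v)" for w v
    using assms by (simp_all add: bilinear_def)
  have "Q w v = (\<Sum>l\<in>UNIV. w $ l * Q (axis l 1) v)"
    by (rule linear_axis_expansion[OF lin(2)])
  also have "\<dots> = (\<Sum>l\<in>UNIV. w $ l * (\<Sum>k\<in>UNIV. v $ k * Q (axis l 1) (axis k 1)))"
    by (subst linear_axis_expansion[OF lin(1)]) (rule refl)
  finally show ?thesis by (simp add: sum_distrib_left mult_ac)
qed

lemma sandwich_bilinear_matrix: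
  fixes Q :: "real^'n \<Rightarrow> real^'n \<Rightarrow> real" and S :: "real^'m^'n"
  assumes "bilinear Q"
  shows "transpose S ** bilinear_matrix Q ** S = (\<chi> i j. Q (column j S) (column i S))"
proof -
  have "(transpose S ** bilinear_matrix Q ** S) $ i $ j = Q (column j S) (column i S)" for i j
    unfolding bilinear_axis_expansion[OF assms, of "column j S" "column i S"]
    by (simp add: matrix_matrix_mult_def transpose_def bilinear_matrix_def column_def
        sum_distrib_left sum_distrib_right mult_ac)
  then show ?thesis by (simp add: vec_eq_iff)
qed

lemma transpose_bilinear_matrix:
  assumes "\<And>v w. Q v w = Q w v"
  shows "transpose (bilinear_matrix Q) = bilinear_matrix Q"
  using assms by (simp add: transpose_def bilinear_matrix_def vec_eq_iff)

lemma inner_bilinear_matrix: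
  fixes Q :: "real^'n \<Rightarrow> real^'n \<Rightarrow> real"
  assumes "bilinear Q"
  shows "w \<bullet> (bilinear_matrix Q *v w) = Q w w"
proof -
  have "w \<bullet> (bilinear_matrix Q *v w) = (\<Sum>k\<in>UNIV. \<Sum>l\<in>UNIV. w $ l * w $ k * Q (axis l 1) (axis k 1))"
    by (simp add: bilinear_matrix_def matrix_vector_mult_def inner_vec_def sum_distrib_left mult_ac)
  also have "\<dots> = Q w w"
    unfolding bilinear_axis_expansion[OF assms, of w w] by (rule sum.swap)
  finally show ?thesis .
qed

lemma inner_sandwich:
  fixes S :: "real^'m^'n" and A :: "real^'n^'n"
  shows "v \<bullet> ((transpose S ** A ** S) *v v) = (S *v v) \<bullet> (A *v (S *v v))"
proof -
  have "(transpose S ** A ** S) *v v = transpose S *v (A *v (S *v v))"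
    by (simp add: matrix_vector_mul_assoc matrix_mul_assoc)
  then show ?thesis by (metis dot_lmul_matrix inner_commute transpose_matrix_vector)
qed

lemma inner_sandwich_bilinear_matrix:
  fixes Q :: "real^'n \<Rightarrow> real^'n \<Rightarrow> real" and S :: "real^'m^'n"
  assumes "bilinear Q"
  shows "v \<bullet> ((transpose S ** bilinear_matrix Q ** S) *v v) = Q (S *v v) (S *v v)"
  unfolding inner_sandwich inner_bilinear_matrix[OF assms] ..

lemma matrix_vector_mult_uminus: "(- A) *v (x::real^'n) = - (A *v x)"
  by (simp add: matrix_vector_mult_def vec_eq_iff sum_negf)

lemma outer_mult_vector: "outer (a::real^'n) *v q = (a \<bullet> q) *\<^sub>R a"
  by (simp add: vec_eq_iff matrix_vector_mult_def outer_def inner_vec_def sum_distrib_left mult_ac)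

lemma trace_uminus: "trace (- (M::real^'n^'n)) = - trace M"
  by (simp add: trace_def sum_negf)

lemma trace_scaleR: "trace (c *\<^sub>R (M::real^'n^'n)) = c * trace M"
  by (simp add: trace_def sum_distrib_left)

lemma trace_outer: "trace (outer (a::real^'n)) = a \<bullet> a"
  by (simp add: trace_def outer_def inner_vec_def)

lemma trace_mult_outer:
  fixes M :: "real^'n^'n"
  shows "trace (M ** outer q) = q \<bullet> (M *v q)"
  by (simp add: trace_def matrix_matrix_mult_def outer_def inner_vec_def matrix_vector_mult_def
      sum_distrib_left mult_ac)

lemma trace_outer_mult:
  fixes M :: "real^'n^'n"
  shows "trace (outer q ** M) = q \<bullet> (M *v q)"
proof -
  have "trace (outer q ** M) = (\<Sum>i\<in>UNIV. \<Sum>k\<in>UNIV. q $ i * q $ k * M $ k $ i)"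
    by (simp add: trace_def matrix_matrix_mult_def outer_def)
  also have "\<dots> = (\<Sum>k\<in>UNIV. \<Sum>i\<in>UNIV. q $ i * q $ k * M $ k $ i)" by (rule sum.swap)
  also have "\<dots> = q \<bullet> (M *v q)"
    by (simp add: inner_vec_def matrix_vector_mult_def sum_distrib_left mult_ac)
  finally show ?thesis .
qed

lemma inner_le_trace_psd:
  fixes M :: "real^'n^'n"
  assumes psd: "\<And>v. 0 \<le> v \<bullet> (M *v v)" and unit: "u \<bullet> u = 1"
  shows "u \<bullet> (M *v u) \<le> trace M"
proof -
  \<comment> \<open>sum the form over the vectors \<open>e\<^sub>i - u\<^sub>i u\<close>, i.e. take the trace of \<open>(I - u u\<^sup>T) M (I - u u\<^sup>T)\<close>\<close>
  define Q where "Q = u \<bullet> (M *v u)"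
  define v where "v i = axis i 1 - u $ i *\<^sub>R u" for i
  have column_inner: "a \<bullet> (M *v axis i 1) = (\<Sum>k\<in>UNIV. a $ k * M $ k $ i)" for a i
    by (simp add: matrix_vector_mult_basis inner_vec_def column_def)
  have expand: "(a - c *\<^sub>R u) \<bullet> (M *v (a - c *\<^sub>R u)) = a \<bullet> (M *v a) - c * (a \<bullet> (M *v u))
      - c * (u \<bullet> (M *v a)) + c\<^sup>2 * Q" for a c
    by (simp add: Q_def inner_diff_left inner_diff_right matrix_vector_mult_diff_distrib
        matrix_vector_mult_scaleR power2_eq_square algebra_simps)
  have diag: "axis i 1 \<bullet> (M *v axis i 1) = M $ i $ i" for i
    by (simp add: inner_axis' matrix_vector_mult_basis column_def)
  have v_form: "v i \<bullet> (M *v v i) =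
      M $ i $ i - u $ i * (M *v u) $ i - u $ i * (\<Sum>k\<in>UNIV. u $ k * M $ k $ i) + (u $ i)\<^sup>2 * Q" for i
    by (simp only: v_def expand diag) (simp add: inner_axis' column_inner Q_def)
  have "(\<Sum>i\<in>UNIV. u $ i * (\<Sum>k\<in>UNIV. u $ k * M $ k $ i)) = (\<Sum>k\<in>UNIV. \<Sum>i\<in>UNIV. u $ i * u $ k * M $ k $ i)"
    by (subst sum.swap) (simp add: sum_distrib_left mult_ac)
  also have "\<dots> = Q" by (simp add: Q_def inner_vec_def matrix_vector_mult_def sum_distrib_left mult_ac)
  finally have s1: "(\<Sum>i\<in>UNIV. u $ i * (\<Sum>k\<in>UNIV. u $ k * M $ k $ i)) = Q" .
  have s2: "(\<Sum>i\<in>UNIV. u $ i * (M *v u) $ i) = Q" by (simp add: Q_def inner_vec_def)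
  have s3: "(\<Sum>i\<in>UNIV. (u $ i)\<^sup>2 * Q) = Q"
    using unit by (simp add: inner_vec_def power2_eq_square sum_distrib_right[symmetric])
  have "0 \<le> (\<Sum>i\<in>UNIV. v i \<bullet> (M *v v i))" by (intro sum_nonneg psd)
  also have "\<dots> = trace M - Q - Q + Q"
    unfolding v_form using s1 s2 s3 by (simp add: sum.distrib sum_subtractf trace_def)
  finally show ?thesis by (simp add: Q_def)
qed

lemma Fmc_eq: "Fmc q M = (q /\<^sub>R norm q) \<bullet> (M *v (q /\<^sub>R norm q)) - trace M"
proof -
  have "(mat 1 - outer u) ** M = mat 1 ** M - outer u ** M" for u
    by (simp add: matrix_matrix_mult_def vec_eq_iff left_diff_distrib sum_subtractf)
  then show ?thesis by (simp add: Fmc_def trace_sub trace_outer_mult)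
qed

lemma Fmc_eq_quotient: "Fmc q M = q \<bullet> (M *v q) / (q \<bullet> q) - trace M"
proof -
  have "(q /\<^sub>R norm q) \<bullet> (M *v (q /\<^sub>R norm q)) = q \<bullet> (M *v q) / (norm q)\<^sup>2"
    by (simp add: matrix_vector_mult_scaleR power2_eq_square field_simps)
  then show ?thesis by (simp add: Fmc_eq power2_norm_eq_inner)
qed

lemma Fmc_zero [simp]: "Fmc q 0 = 0"
  by (simp add: Fmc_eq trace_def)

lemma Fmc_antimono:
  assumes "\<And>v. v \<bullet> (N *v v) \<le> v \<bullet> (M *v v)" and "q \<noteq> 0"
  shows "Fmc q M \<le> Fmc q N"
proof -
  define u where "u = q /\<^sub>R norm q"
  have "u \<bullet> u = 1" using assms(2) by (simp add: u_def power2_norm_eq_inner[symmetric] power2_eq_square)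
  then have "u \<bullet> ((M - N) *v u) \<le> trace (M - N)"
    by (intro inner_le_trace_psd) (use assms(1) in \<open>simp add: matrix_vector_mult_diff_rdistrib inner_diff_right\<close>)
  then show ?thesis
    unfolding Fmc_eq u_def[symmetric] by (simp add: trace_sub matrix_vector_mult_diff_rdistrib inner_diff_right)
qed

lemma abs_Fmc_le: "\<bar>Fmc q M\<bar> \<le> 2 * (\<Sum>i\<in>UNIV. \<Sum>j\<in>UNIV. \<bar>M $ i $ j\<bar>)"
proof -
  define u where "u = q /\<^sub>R norm q"
  have "norm u \<le> 1" unfolding u_def sgn_div_norm[symmetric] norm_sgn by simp
  then have u_le: "\<bar>u $ i\<bar> \<le> 1" for i using component_le_norm_cart[of u i] by linarith
  have "\<bar>u \<bullet> (M *v u)\<bar> = \<bar>\<Sum>i\<in>UNIV. \<Sum>j\<in>UNIV. u $ i * M $ i $ j * u $ j\<bar>"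
    by (simp add: inner_vec_def matrix_vector_mult_def sum_distrib_left mult_ac)
  also have "\<dots> \<le> (\<Sum>i\<in>UNIV. \<Sum>j\<in>UNIV. \<bar>u $ i * M $ i $ j * u $ j\<bar>)"
    by (rule order_trans[OF sum_abs sum_mono[OF sum_abs]])
  also have "\<dots> \<le> (\<Sum>i\<in>UNIV. \<Sum>j\<in>UNIV. \<bar>M $ i $ j\<bar>)"
  proof (intro sum_mono)
    fix i j
    have "\<bar>u $ i\<bar> * \<bar>M $ i $ j\<bar> * \<bar>u $ j\<bar> \<le> 1 * \<bar>M $ i $ j\<bar> * 1"
      using u_le[of i] u_le[of j] by (intro mult_mono) auto
    then show "\<bar>u $ i * M $ i $ j * u $ j\<bar> \<le> \<bar>M $ i $ j\<bar>" by (simp add: abs_mult)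
  qed
  finally have quadratic: "\<bar>u \<bullet> (M *v u)\<bar> \<le> (\<Sum>i\<in>UNIV. \<Sum>j\<in>UNIV. \<bar>M $ i $ j\<bar>)" .
  have "\<bar>trace M\<bar> \<le> (\<Sum>i\<in>UNIV. \<bar>M $ i $ i\<bar>)" unfolding trace_def by (rule sum_abs)
  also have "\<dots> \<le> (\<Sum>i\<in>UNIV. \<Sum>j\<in>UNIV. \<bar>M $ i $ j\<bar>)"
    by (intro sum_mono member_le_sum) auto
  finally show ?thesis using quadratic unfolding Fmc_eq u_def[symmetric] by linarith
qed

lemma trace_sub_outer_eq_Fmc: "trace (M - (M ** outer q) /\<^sub>R (norm q)\<^sup>2) = - Fmc q M"
  by (simp add: Fmc_eq_quotient trace_sub trace_scaleR trace_mult_outer power2_norm_eq_inner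
      divide_inverse mult.commute)

section \<open>Horizontal structure\<close>

lemma hpart_add [simp]: "hpart (x + y) = hpart x + hpart y"
  by (simp add: hpart_def vec_eq_iff)

lemma hpart_scaleR [simp]: "hpart (c *\<^sub>R x) = c *\<^sub>R hpart x"
  by (simp add: hpart_def vec_eq_iff)

lemma vpart_add [simp]: "vpart (x + y) = vpart x + vpart y"
  by (simp add: vpart_def)

lemma vpart_scaleR [simp]: "vpart (c *\<^sub>R x) = c * vpart x"
  by (simp add: vpart_def)

lemma bounded_linear_hpart: "bounded_linear hpart"
  by (simp add: linear_iff linear_conv_bounded_linear[symmetric])

lemma bounded_linear_vpart: "bounded_linear vpart"
  by (simp add: linear_iff linear_conv_bounded_linear[symmetric])

lemmas has_derivative_hpart [derivative_intros] = bounded_linear.has_derivative[OF bounded_linear_hpart]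
lemmas has_derivative_vpart [derivative_intros] = bounded_linear.has_derivative[OF bounded_linear_vpart]
lemmas continuous_on_hpart [continuous_intros] = bounded_linear.continuous_on[OF bounded_linear_hpart]
lemmas continuous_on_vpart [continuous_intros] = bounded_linear.continuous_on[OF bounded_linear_vpart]

lemma hpart_column_sigma [simp]: "hpart (column j (sigma B x)) = axis j 1"
  by (simp add: hpart_def column_def sigma_def axis_def vec_eq_iff)

lemma vpart_column_sigma [simp]: "vpart (column j (sigma B x)) = (B *v hpart x) $ j"
  by (simp add: vpart_def column_def sigma_def)

lemma vpart_sigma_mult: "vpart (sigma B x *v v) = (B *v hpart x) \<bullet> v"
  by (simp add: vpart_def matrix_vector_mult_def sigma_def inner_vec_def mult.commute)

lemma skew_involution_orthogonal:
  fixes B :: "real^'m^'m"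
  assumes "transpose B = - B" "invertible B" "matrix_inv B = - B"
  shows "a \<bullet> (B *v a) = 0" "(B *v a) \<bullet> (B *v a) = a \<bullet> a"
proof -
  have skew: "a \<bullet> (B *v y) = - ((B *v a) \<bullet> y)" for y
  proof -
    have "a \<bullet> (B *v y) = (a v* B) \<bullet> y" by (simp add: dot_lmul_matrix)
    also have "a v* B = transpose B *v a" by simp
    also have "\<dots> = - (B *v a)" using assms(1) by (simp add: matrix_vector_mult_uminus)
    finally show ?thesis by simp
  qed
  from skew[of a] show "a \<bullet> (B *v a) = 0" by (simp add: inner_commute)
  have "matrix_inv B ** B = mat 1"
    using assms(2) unfolding invertible_def matrix_inv_def by (metis (mono_tags, lifting) someI_ex)
  moreover have "- (B *v (B *v a)) = (matrix_inv B ** B) *v a"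
    using assms(3) by (simp add: matrix_vector_mul_assoc[symmetric] matrix_vector_mult_uminus)
  ultimately have "- (B *v (B *v a)) = a" by simp
  moreover have "(B *v a) \<bullet> (B *v a) = a \<bullet> (- (B *v (B *v a)))"
    using skew[of "B *v a"] by simp
  ultimately show "(B *v a) \<bullet> (B *v a) = a \<bullet> a" by simp
qed

lemma grad_eq:
  assumes "((\<lambda>y. u y t) has_derivative u') (at x)"
  shows "grad u x t = (\<chi> i. u' (axis i 1))"
  using deriv_along_line[OF assms] by (simp add: grad_def)

lemma hess_eq:
  assumes "open U" "x \<in> U" "\<And>y. y \<in> U \<Longrightarrow> ((\<lambda>y. u y t) has_derivative u' y) (at y)"
    and "\<And>v. ((\<lambda>y. u' y v) has_derivative (\<lambda>w. u'' w v)) (at x)"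
  shows "hess u x t = bilinear_matrix u''"
proof -
  have "grad u y t = (\<chi> i. u' y (axis i 1))" if "y \<in> U" for y
    using assms(3)[OF that] by (rule grad_eq)
  then have "((\<lambda>y. grad u y t $ i) has_derivative (\<lambda>w. u'' w (axis i 1))) (at x)" for i
    by (intro has_derivative_transform_within_open[OF assms(4) assms(1,2)]) simp
  from deriv_along_line[OF this] show ?thesis
    by (simp add: hess_def bilinear_matrix_def)
qed

lemma dtime_eq: "((\<lambda>s. u x s) has_real_derivative a) (at t) \<Longrightarrow> dtime u x t = a"
  unfolding dtime_def by (rule DERIV_imp_deriv)

section \<open>The barrier function\<close>

definition barrier :: "real \<Rightarrow> real \<Rightarrow> real^('m::finite option) \<Rightarrow> real \<Rightarrow> real" where
  "barrier c r x t = c * t - ((norm (hpart x)) ^ 4 + 4 * (vpart x) ^ 2) + r"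

definition barrier_Dx :: "real^('m::finite option) \<Rightarrow> real^('m option) \<Rightarrow> real" where
  "barrier_Dx y h = - (4 * (hpart y \<bullet> hpart y) * (hpart y \<bullet> hpart h) + 8 * vpart y * vpart h)"

definition barrier_Dxx :: "real^('m::finite option) \<Rightarrow> real^('m option) \<Rightarrow> real^('m option) \<Rightarrow> real" where
  "barrier_Dxx y w h = - (8 * (hpart y \<bullet> hpart w) * (hpart y \<bullet> hpart h)
     + 4 * (hpart y \<bullet> hpart y) * (hpart w \<bullet> hpart h) + 8 * vpart w * vpart h)"

lemma barrier_eq: "barrier c r y t = c * t - ((hpart y \<bullet> hpart y)\<^sup>2 + 4 * (vpart y)\<^sup>2) + r"
  by (simp add: barrier_def power2_norm_eq_inner[symmetric] flip: power_mult)

lemma has_derivative_barrier: "((\<lambda>y. barrier c r y t) has_derivative barrier_Dx y) (at y)"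
  unfolding barrier_eq
  by (auto intro!: derivative_eq_intros
      simp: barrier_Dx_def fun_eq_iff inner_commute algebra_simps power2_eq_square)

lemma has_derivative_barrier_Dx: "((\<lambda>y. barrier_Dx y h) has_derivative (\<lambda>w. barrier_Dxx y w h)) (at y)"
  unfolding barrier_Dx_def
  by (auto intro!: derivative_eq_intros simp: barrier_Dxx_def fun_eq_iff inner_commute algebra_simps)

lemma has_real_derivative_barrier_time: "((\<lambda>s. barrier c r x s) has_real_derivative c) (at t)"
  unfolding barrier_def by (auto intro!: derivative_eq_intros)

lemma linear_barrier_Dx: "linear (barrier_Dx y)"
  by (simp add: linear_iff barrier_Dx_def inner_add_right algebra_simps)

lemma bilinear_barrier_Dxx: "bilinear (barrier_Dxx y)"
  by (simp add: bilinear_def linear_iff barrier_Dxx_def inner_add_left inner_add_right algebra_simps)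

lemma barrier_Dxx_nonpos: "barrier_Dxx y w w \<le> 0"
proof -
  have "0 \<le> (hpart y \<bullet> hpart y) * (hpart w \<bullet> hpart w)" by simp
  moreover have "0 \<le> (hpart y \<bullet> hpart w)\<^sup>2" "0 \<le> (vpart w)\<^sup>2" by simp_all
  moreover have "barrier_Dxx y w w = - (8 * (hpart y \<bullet> hpart w)\<^sup>2
      + 4 * ((hpart y \<bullet> hpart y) * (hpart w \<bullet> hpart w)) + 8 * (vpart w)\<^sup>2)"
    by (simp add: barrier_Dxx_def power2_eq_square mult.assoc)
  ultimately show ?thesis by linarith
qed

lemma continuous_on_barrier: "continuous_on S (\<lambda>(y, s). barrier c r y s)"
  unfolding barrier_def case_prod_unfold by (intro continuous_intros)

lemma grad_barrier: "grad (barrier c r) x t = (\<chi> i. barrier_Dx x (axis i 1))"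
  by (rule grad_eq[OF has_derivative_barrier])

lemma hess_barrier: "hess (barrier c r) x t = bilinear_matrix (barrier_Dxx x)"
  by (rule hess_eq[of UNIV, OF _ _ has_derivative_barrier has_derivative_barrier_Dx]) auto

lemma Xh_barrier:
  "Xh B (barrier c r) x t = - ((4 * (hpart x \<bullet> hpart x)) *\<^sub>R hpart x + (8 * vpart x) *\<^sub>R (B *v hpart x))"
  unfolding Xh_def grad_barrier vector_matrix_mult_linear_axis[OF linear_barrier_Dx]
  by (simp add: vec_eq_iff barrier_Dx_def inner_axis)

lemma X2h_barrier:
  "X2h B (barrier c r) x t = - (8 *\<^sub>R outer (hpart x) + (4 * (hpart x \<bullet> hpart x)) *\<^sub>R mat 1
      + 8 *\<^sub>R outer (B *v hpart x))"
proof -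
  have axis_entry: "axis j (1::real) $ i = (if i = j then 1 else 0)" for i j by (simp add: axis_def)
  show ?thesis
    unfolding X2h_def hess_barrier sandwich_bilinear_matrix[OF bilinear_barrier_Dxx]
    by (simp add: vec_eq_iff barrier_Dxx_def inner_axis inner_axis_axis outer_def mat_def
        axis_entry algebra_simps)
qed

lemma Fmc_barrier:
  fixes B :: "real^'m::finite^'m"
  assumes B: "transpose B = - B" "invertible B" "matrix_inv B = - B" and "hpart x \<noteq> 0"
  shows "Xh B (barrier c r) x t \<noteq> 0"
    and "Fmc (Xh B (barrier c r) x t) (X2h B (barrier c r) x t) = 4 * real (CARD('m) + 1) * (norm (hpart x))\<^sup>2"
proof -
  define a where "a = hpart x"
  define b where "b = B *v a"
  define A where "A = a \<bullet> a"
  define q where "q = Xh B (barrier c r) x t"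
  define M where "M = X2h B (barrier c r) x t"
  have ab: "a \<bullet> b = 0" "b \<bullet> a = 0" and bb: "b \<bullet> b = A"
    using skew_involution_orthogonal[OF B, of a] by (auto simp: b_def A_def inner_commute)
  have "A > 0" using assms(4) by (simp add: A_def a_def)
  have q: "q = - ((4 * A) *\<^sub>R a + (8 * vpart x) *\<^sub>R b)"
    by (simp add: q_def Xh_barrier a_def b_def A_def)
  have M: "M = - (8 *\<^sub>R outer a + (4 * A) *\<^sub>R mat 1 + 8 *\<^sub>R outer b)"
    by (simp add: M_def X2h_barrier a_def b_def A_def)
  have aq: "a \<bullet> q = - (4 * A * A)" and bq: "b \<bullet> q = - (8 * vpart x * A)"
    using ab bb by (simp_all add: q A_def inner_add_right inner_diff_right)
  have qq: "q \<bullet> q = 16 * A ^ 3 + 64 * (vpart x)\<^sup>2 * A"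
    using ab bb by (simp add: q inner_add_right inner_add_left A_def power2_eq_square power3_eq_cube
        algebra_simps)
  then have "q \<bullet> q > 0" using \<open>A > 0\<close> by (simp add: add_pos_nonneg)
  then show "q \<noteq> 0" by auto
  have tr: "trace M = - (16 + 4 * real CARD('m)) * A"
    unfolding M trace_uminus trace_add trace_scaleR trace_outer trace_I using bb
    by (simp add: A_def algebra_simps)
  have "M *v q = - ((8 * (a \<bullet> q)) *\<^sub>R a + (4 * A) *\<^sub>R q + (8 * (b \<bullet> q)) *\<^sub>R b)"
    unfolding M by (simp add: matrix_vector_mult_uminus matrix_vector_mult_diff_rdistrib outer_mult_vector
        flip: scaleR_matrix_vector_assoc)
  then have qMq: "q \<bullet> (M *v q) = - (8 * (a \<bullet> q)\<^sup>2 + 4 * A * (q \<bullet> q) + 8 * (b \<bullet> q)\<^sup>2)"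
    by (simp add: inner_diff_right inner_commute power2_eq_square)
  have "Fmc q M = (4 * real CARD('m) + 4) * A"
    using \<open>q \<bullet> q > 0\<close> unfolding Fmc_eq_quotient tr qMq aq bq qq
    by (simp add: field_simps power2_eq_square power3_eq_cube)
  then show "Fmc q M = 4 * real (CARD('m) + 1) * (norm (hpart x))\<^sup>2"
    by (simp add: A_def a_def power2_norm_eq_inner algebra_simps)
qed

section \<open>Semicontinuous envelopes of G\<close>

lemma continuous_on_matrix_mult [continuous_intros]:
  fixes f :: "_ \<Rightarrow> real^'n^'m" and g :: "_ \<Rightarrow> real^'k^'n"
  assumes "continuous_on S f" "continuous_on S g"
  shows "continuous_on S (\<lambda>x. f x ** g x)"
  unfolding matrix_matrix_mult_def using assms by (intro continuous_intros)

lemma continuous_on_transpose [continuous_intros]: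
  fixes f :: "_ \<Rightarrow> real^'n^'m"
  assumes "continuous_on S f"
  shows "continuous_on S (\<lambda>x. transpose (f x))"
  unfolding transpose_def using assms by (intro continuous_intros)

lemma continuous_on_sigma [continuous_intros]:
  assumes "continuous_on S f"
  shows "continuous_on S (\<lambda>w. sigma B (f w))"
  unfolding sigma_def
proof (intro continuous_intros)
  fix k j
  have "continuous_on S (\<lambda>w. B *v hpart (f w))"
    by (intro bounded_linear.continuous_on[OF matrix_vector_mul_bounded_linear] continuous_intros assms)
  then show "continuous_on S (\<lambda>w. case k of Some i \<Rightarrow> if i = j then 1 else 0 | None \<Rightarrow> (B *v hpart (f w)) $ j)"
    by (cases k) (auto intro: continuous_intros)
qed

text \<open>Suprema and infima of real sets are junk unless the sets are bounded.\<close>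

lemma Gop_locally_bounded: "\<exists>K. \<forall>w. dist w z < e \<longrightarrow> \<bar>Gop B w\<bar> \<le> K"
proof -
  define g where "g w = 2 * (\<Sum>i\<in>UNIV. \<Sum>j\<in>UNIV.
      \<bar>(transpose (sigma B (fst w)) ** snd (snd (snd w)) ** sigma B (fst w)) $ i $ j\<bar>)"
    for w :: "'a jet"
  have "continuous_on (cball z e) g"
    unfolding g_def by (intro continuous_intros)
  then have "bounded (g ` cball z e)"
    by (rule compact_imp_bounded[OF compact_continuous_image[OF _ compact_cball]])
  then obtain K where K: "\<And>w. w \<in> cball z e \<Longrightarrow> \<bar>g w\<bar> \<le> K"
    unfolding bounded_real by blast
  have "\<bar>Gop B w\<bar> \<le> K" if "dist w z < e" for w
  proof -
    have "\<bar>Gop B w\<bar> \<le> g w" by (cases w) (simp add: Gop_def g_def abs_Fmc_le)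
    also have "\<dots> \<le> K" using K[of w] that by (simp add: dist_commute)
    finally show ?thesis .
  qed
  then show ?thesis by blast
qed

lemma G_lower_le:
  assumes "\<And>e. e > 0 \<Longrightarrow> \<exists>w\<in>Gdom B. dist w z < e \<and> Gop B w \<le> L"
  shows "G_lower B z \<le> L"
  unfolding G_lower_def
proof (rule cSUP_least)
  fix e :: real assume "e \<in> {0<..}"
  with assms obtain w where w: "w \<in> Gdom B" "dist w z < e" "Gop B w \<le> L" by fastforce
  obtain K where "\<forall>w. dist w z < e \<longrightarrow> \<bar>Gop B w\<bar> \<le> K" using Gop_locally_bounded by blast
  then have "bdd_below (Gop B ` {w \<in> Gdom B. dist w z < e})"
    by (intro bdd_belowI2[where m="-K"]) (force simp: abs_le_iff)
  then show "(INF w\<in>{w \<in> Gdom B. dist w z < e}. Gop B w) \<le> L"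
    by (rule cINF_lower2) (use w in auto)
qed auto

lemma G_upper_ge:
  assumes "\<And>e. e > 0 \<Longrightarrow> \<exists>w\<in>Gdom B. dist w z < e \<and> L \<le> Gop B w"
  shows "L \<le> G_upper B z"
  unfolding G_upper_def
proof (rule cINF_greatest)
  fix e :: real assume "e \<in> {0<..}"
  with assms obtain w where w: "w \<in> Gdom B" "dist w z < e" "L \<le> Gop B w" by fastforce
  obtain K where "\<forall>w. dist w z < e \<longrightarrow> \<bar>Gop B w\<bar> \<le> K" using Gop_locally_bounded by blast
  then have "bdd_above (Gop B ` {w \<in> Gdom B. dist w z < e})"
    by (intro bdd_aboveI2[where M=K]) (auto simp: abs_le_iff)
  then show "L \<le> (SUP w\<in>{w \<in> Gdom B. dist w z < e}. Gop B w)"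
    by (rule cSUP_upper2) (use w in auto)
qed auto

lemma G_lower_le_Gop: "z \<in> Gdom B \<Longrightarrow> G_lower B z \<le> Gop B z"
  by (intro G_lower_le bexI[of _ z]) auto

lemma exists_horizontal_gradient_near:
  fixes B :: "real^'m::finite^'m" and p :: "real^('m option)"
  assumes "e > 0"
  shows "\<exists>p'. dist p' p < e \<and> p' v* sigma B x \<noteq> 0"
proof (cases "p v* sigma B x = 0")
  case True
  define p' where "p' = p + (e / 2) *\<^sub>R axis (Some undefined) 1"
  have "axis (Some undefined) 1 v* sigma B x = axis undefined (1::real)"
    by (simp add: vec_eq_iff vector_matrix_mult_def sigma_def axis_def if_distrib[of "\<lambda>a. a * _"]
        cong: if_cong)
  then have "p' v* sigma B x = (e / 2) *\<^sub>R axis undefined 1"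
    by (simp add: p'_def vector_matrix_left_distrib scaleR_vector_matrix_assoc True)
  then show ?thesis using assms by (intro exI[of _ p']) (simp add: p'_def dist_norm axis_eq_0_iff)
next
  case False
  then show ?thesis using assms by (intro exI[of _ p]) simp
qed

lemma G_upper_ge_all_gradients:
  assumes "0 < t" "transpose A = A" "\<And>p'. p' v* sigma B x \<noteq> 0 \<Longrightarrow> L \<le> Gop B (x, t, p', A)"
  shows "L \<le> G_upper B (x, t, p, A)"
proof (rule G_upper_ge)
  fix e :: real assume "e > 0"
  then obtain p' where "dist p' p < e" "p' v* sigma B x \<noteq> 0"
    using exists_horizontal_gradient_near by blast
  then show "\<exists>w\<in>Gdom B. dist w (x, t, p, A) < e \<and> L \<le> Gop B w"
    using assms by (intro bexI[of _ "(x, t, p', A)"]) (auto simp: Gdom_def dist_Pair_Pair)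
qed

lemma G_lower_le_all_gradients:
  assumes "0 < t" "transpose A = A" "\<And>p'. p' v* sigma B x \<noteq> 0 \<Longrightarrow> Gop B (x, t, p', A) \<le> L"
  shows "G_lower B (x, t, p, A) \<le> L"
proof (rule G_lower_le)
  fix e :: real assume "e > 0"
  then obtain p' where "dist p' p < e" "p' v* sigma B x \<noteq> 0"
    using exists_horizontal_gradient_near by blast
  then show "\<exists>w\<in>Gdom B. dist w (x, t, p, A) < e \<and> Gop B w \<le> L"
    using assms by (intro bexI[of _ "(x, t, p', A)"]) (auto simp: Gdom_def dist_Pair_Pair)
qed

lemma G_upper_nonneg_if_nsd:
  assumes "0 < t" "transpose A = A"
    and "\<And>v. v \<bullet> ((transpose (sigma B x) ** A ** sigma B x) *v v) \<le> 0"
  shows "0 \<le> G_upper B (x, t, p, A)"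
proof (rule G_upper_ge_all_gradients[OF assms(1,2)])
  fix p' assume "p' v* sigma B x \<noteq> 0"
  then have "Fmc (p' v* sigma B x) 0 \<le> Fmc (p' v* sigma B x) (transpose (sigma B x) ** A ** sigma B x)"
    by (intro Fmc_antimono) (use assms(3) in simp)
  then show "0 \<le> Gop B (x, t, p', A)" by (simp add: Gop_def)
qed

lemma G_lower_nonpos_if_psd:
  assumes "0 < t" "transpose A = A"
    and "\<And>v. 0 \<le> v \<bullet> ((transpose (sigma B x) ** A ** sigma B x) *v v)"
  shows "G_lower B (x, t, p, A) \<le> 0"
proof (rule G_lower_le_all_gradients[OF assms(1,2)])
  fix p' assume "p' v* sigma B x \<noteq> 0"
  then have "Fmc (p' v* sigma B x) (transpose (sigma B x) ** A ** sigma B x) \<le> Fmc (p' v* sigma B x) 0"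
    by (intro Fmc_antimono) (use assms(3) in simp)
  then show "Gop B (x, t, p', A) \<le> 0" by (simp add: Gop_def)
qed

section \<open>Test functions touching at a point\<close>

lemma open_slice:
  fixes S :: "('a::metric_space \<times> 'b::metric_space) set"
  shows "open S \<Longrightarrow> open {y. (y, t) \<in> S}"
  using continuous_open_vimage[of S "\<lambda>y. (y, t)"] by (simp add: vimage_def continuous_intros)

lemma C2_on_spatial_derivatives:
  fixes \<phi> :: "real^'n \<Rightarrow> real \<Rightarrow> real"
  assumes "(x, t) \<in> S" "C2_on S \<phi>"
  obtains \<phi>' \<phi>'' where
    "\<And>y. (y, t) \<in> S \<Longrightarrow> ((\<lambda>y. \<phi> y t) has_derivative \<phi>' y) (at y)"
    "\<And>v. ((\<lambda>y. \<phi>' y v) has_derivative (\<lambda>w. \<phi>'' w v)) (at x)"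
    "bilinear \<phi>''"
proof -
  obtain D D2 where D: "\<And>z. z \<in> S \<Longrightarrow> ((\<lambda>(y, s). \<phi> y s) has_derivative blinfun_apply (D z)) (at z)"
    and D2: "\<And>z. z \<in> S \<Longrightarrow> (D has_derivative blinfun_apply (D2 z)) (at z)"
    using assms(2) unfolding C2_on_def by blast
  have slice: "((\<lambda>y. (y, t)) has_derivative (\<lambda>h. (h, 0))) (at y)" for y :: "real^'n"
    by (auto intro!: derivative_eq_intros)
  define \<phi>' where "\<phi>' y h = D (y, t) (h, 0)" for y h
  define \<phi>'' where "\<phi>'' w v = D2 (x, t) (w, 0) (v, 0)" for w v
  have "((\<lambda>y. \<phi> y t) has_derivative \<phi>' y) (at y)" if "(y, t) \<in> S" for y
    using has_derivative_compose[OF slice D[OF that]] by (simp add: \<phi>'_def[abs_def])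
  moreover have "((\<lambda>y. \<phi>' y v) has_derivative (\<lambda>w. \<phi>'' w v)) (at x)" for v
    using bounded_linear.has_derivative[OF blinfun.bounded_linear_left
        has_derivative_compose[OF slice D2[OF assms(1)]]]
    by (simp add: \<phi>'_def \<phi>''_def)
  moreover have "bilinear \<phi>''"
  proof -
    have pair_linear: "linear (\<lambda>v. blinfun_apply G (v, 0::real))" for G :: "((real^'n) \<times> real) \<Rightarrow>\<^sub>L real"
      using blinfun.add_right[of G "(_, 0)" "(_, 0)"] blinfun.scaleR_right[of G _ "(_, 0)"]
      by (simp add: linear_iff)
    have "linear (\<lambda>w. blinfun_apply (D2 (x, t)) (w, 0))"
      using blinfun.add_right[of "D2 (x, t)" "(_, 0)" "(_, 0)"] blinfun.scaleR_right[of "D2 (x, t)" _ "(_, 0)"]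
      by (simp add: linear_iff)
    then have "linear ((\<lambda>G. blinfun_apply G (v, 0)) \<circ> (\<lambda>w. blinfun_apply (D2 (x, t)) (w, 0)))" for v
      by (intro linear_compose bounded_linear.linear[OF blinfun.bounded_linear_left])
    then show ?thesis using pair_linear by (simp add: bilinear_def \<phi>''_def o_def)
  qed
  ultimately show ?thesis using that by blast
qed

lemma C2_on_hess:
  fixes \<phi> :: "real^'n \<Rightarrow> real \<Rightarrow> real"
  assumes "open S" "(x, t) \<in> S"
    and "\<And>y. (y, t) \<in> S \<Longrightarrow> ((\<lambda>y. \<phi> y t) has_derivative \<phi>' y) (at y)"
    and "\<And>v. ((\<lambda>y. \<phi>' y v) has_derivative (\<lambda>w. \<phi>'' w v)) (at x)"
  shows "hess \<phi> x t = bilinear_matrix \<phi>''" and "transpose (hess \<phi> x t) = hess \<phi> x t"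
proof -
  have U: "open {y. (y, t) \<in> S}" "x \<in> {y. (y, t) \<in> S}" using assms(1,2) open_slice by auto
  show hess: "hess \<phi> x t = bilinear_matrix \<phi>''"
    using hess_eq[OF U] assms(3,4) by blast
  show "transpose (hess \<phi> x t) = hess \<phi> x t"
    unfolding hess using second_derivative_symmetric[OF U] assms(3,4)
    by (intro transpose_bilinear_matrix) blast
qed

lemma C2_on_time_derivative:
  fixes \<phi> :: "real^'n \<Rightarrow> real \<Rightarrow> real"
  assumes "(x, t) \<in> S" "C2_on S \<phi>"
  shows "((\<lambda>s. \<phi> x s) has_real_derivative dtime \<phi> x t) (at t)"
proof -
  obtain D where D: "((\<lambda>(y, s). \<phi> y s) has_derivative blinfun_apply D) (at (x, t))"
    using assms unfolding C2_on_def by fast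
  have "((\<lambda>s. (x, s)) has_derivative (\<lambda>h. (0, h))) (at t)"
    by (auto intro!: derivative_eq_intros)
  from has_derivative_compose[OF this D]
  have "((\<lambda>s. \<phi> x s) has_derivative (\<lambda>h. D (0, h))) (at t)" by simp
  moreover have "(\<lambda>h. D (0, h)) = (*) (D (0, 1))"
  proof
    fix h :: real
    show "D (0, h) = D (0, 1) * h"
      using blinfun.scaleR_right[of D h "(0, 1)"] by (simp add: mult.commute)
  qed
  ultimately have "((\<lambda>s. \<phi> x s) has_real_derivative D (0, 1)) (at t)"
    by (simp add: has_field_derivative_def)
  then show ?thesis by (simp add: dtime_eq)
qed

lemma local_max_on_imp_local_min_on_uminus: "local_max_on S f z \<Longrightarrow> local_min_on S (\<lambda>w. - f w) z"
  unfolding local_max_on_def local_min_on_def by (simp only: neg_le_iff_le)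

lemma local_min_on_open_imp_eventually:
  assumes "open S" "z \<in> S" "local_min_on S f z"
  shows "eventually (\<lambda>w. f z \<le> f w) (nhds z)"
proof -
  obtain e where "e > 0" "\<And>w. w \<in> S \<Longrightarrow> dist w z < e \<Longrightarrow> f z \<le> f w"
    using assms(3) unfolding local_min_on_def by blast
  moreover have "eventually (\<lambda>w. dist w z < e) (nhds z)"
    unfolding eventually_nhds_metric using \<open>e > 0\<close> by blast
  moreover have "eventually (\<lambda>w. w \<in> S) (nhds z)" using assms(1,2) by (rule eventually_nhds_in_open)
  ultimately show ?thesis by (auto elim: eventually_elim2)
qed

lemma eventually_nhds_Pair_slices:
  fixes x :: "'a::metric_space" and t :: "'b::metric_space"
  assumes "eventually P (nhds (x, t))"
  shows "eventually (\<lambda>y. P (y, t)) (nhds x)" "eventually (\<lambda>s. P (x, s)) (nhds t)"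
  using assms unfolding eventually_nhds_metric by (fastforce simp: dist_Pair_Pair)+

lemma local_min_of_difference:
  fixes u \<phi> :: "'a::real_normed_vector \<Rightarrow> real \<Rightarrow> real"
  assumes "open U" "x \<in> U"
    and u': "\<And>y. y \<in> U \<Longrightarrow> ((\<lambda>y. u y t) has_derivative u' y) (at y)"
    and u'': "\<And>v. ((\<lambda>y. u' y v) has_derivative (\<lambda>w. u'' w v)) (at x)"
    and \<phi>': "\<And>y. y \<in> U \<Longrightarrow> ((\<lambda>y. \<phi> y t) has_derivative \<phi>' y) (at y)"
    and \<phi>'': "\<And>v. ((\<lambda>y. \<phi>' y v) has_derivative (\<lambda>w. \<phi>'' w v)) (at x)"
    and "((\<lambda>s. u x s) has_real_derivative a) (at t)" "((\<lambda>s. \<phi> x s) has_real_derivative b) (at t)"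
    and min: "eventually (\<lambda>(y, s). u x t - \<phi> x t \<le> u y s - \<phi> y s) (nhds (x, t))"
  shows "a = b" and "u' x = \<phi>' x" and "\<phi>'' w w \<le> u'' w w"
proof -
  obtain d where "d > 0" "\<And>s. dist s t < d \<Longrightarrow> u x t - \<phi> x t \<le> u x s - \<phi> x s"
    using eventually_nhds_Pair_slices(2)[OF min] unfolding eventually_nhds_metric by auto
  then have "a - b = 0"
    by (intro DERIV_local_min[OF DERIV_diff[OF assms(7,8)]]) (auto simp: dist_real_def abs_minus_commute)
  then show "a = b" by simp
  have space_min: "eventually (\<lambda>y. u x t - \<phi> x t \<le> u y t - \<phi> y t) (nhds x)"
    using eventually_nhds_Pair_slices(1)[OF min] by simp
  have diff': "((\<lambda>y. u y t - \<phi> y t) has_derivative (\<lambda>h. u' y h - \<phi>' y h)) (at y)" if "y \<in> U" for y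
    using u'[OF that] \<phi>'[OF that] by (rule has_derivative_diff)
  have "(\<lambda>h. u' x h - \<phi>' x h) = (\<lambda>h. 0)"
    using has_derivative_local_min[OF diff'[OF assms(2)]] space_min
    by (simp add: filter_leD[OF at_within_le_nhds])
  then show "u' x = \<phi>' x" by (simp add: fun_eq_iff)
  have "0 \<le> u'' w w - \<phi>'' w w"
    by (rule local_min_second_derivative_nonneg[OF assms(1,2) diff' has_derivative_diff[OF u'' \<phi>''] space_min])
  then show "\<phi>'' w w \<le> u'' w w" by simp
qed

lemma continuous_on_imp_usc_on: "continuous_on S (\<lambda>(y, s). u y s) \<Longrightarrow> usc_on S u"
  unfolding usc_on_def continuous_on_def by (blast intro: order_tendstoD(2))

lemma continuous_on_imp_lsc_on: "continuous_on S (\<lambda>(y, s). u y s) \<Longrightarrow> lsc_on S u"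
  unfolding lsc_on_def continuous_on_def by (blast intro: order_tendstoD(1))

lemma C2_touching_from_below:
  fixes \<phi> u :: "real^'n \<Rightarrow> real \<Rightarrow> real"
  assumes S: "open S" "(x, t) \<in> S" "C2_on S \<phi>"
    and u': "\<And>y. ((\<lambda>y. u y t) has_derivative u' y) (at y)"
    and u'': "\<And>v. ((\<lambda>y. u' y v) has_derivative (\<lambda>w. u'' w v)) (at x)"
    and u_t: "((\<lambda>s. u x s) has_real_derivative a) (at t)"
    and min: "eventually (\<lambda>(y, s). u x t - \<phi> x t \<le> u y s - \<phi> y s) (nhds (x, t))"
  obtains \<phi>'' where "bilinear \<phi>''" "hess \<phi> x t = bilinear_matrix \<phi>''"
    "transpose (hess \<phi> x t) = hess \<phi> x t" "dtime \<phi> x t = a" "\<And>w. \<phi>'' w w \<le> u'' w w"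
proof -
  obtain \<phi>' \<phi>'' where \<phi>': "\<And>y. (y, t) \<in> S \<Longrightarrow> ((\<lambda>y. \<phi> y t) has_derivative \<phi>' y) (at y)"
    and \<phi>'': "\<And>v. ((\<lambda>y. \<phi>' y v) has_derivative (\<lambda>w. \<phi>'' w v)) (at x)" and "bilinear \<phi>''"
    using C2_on_spatial_derivatives[OF S(2,3)] by blast
  have U: "open {y. (y, t) \<in> S}" "x \<in> {y. (y, t) \<in> S}" using open_slice[OF S(1)] S(2) by blast+
  have "\<And>y. y \<in> {y. (y, t) \<in> S} \<Longrightarrow> ((\<lambda>y. \<phi> y t) has_derivative \<phi>' y) (at y)" using \<phi>' by blast
  note conditions = local_min_of_difference[where u=u and \<phi>=\<phi> and t=t,
      OF U u' u'' this \<phi>'' u_t C2_on_time_derivative[OF S(2,3)] min]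
  show ?thesis
    using that[OF \<open>bilinear \<phi>''\<close>] C2_on_hess[where \<phi>=\<phi> and t=t, OF S(1,2) \<phi>' \<phi>''] conditions(1,3)
    by simp
qed

lemma C2_touching_from_above:
  fixes \<phi> u :: "real^'n \<Rightarrow> real \<Rightarrow> real"
  assumes S: "open S" "(x, t) \<in> S" "C2_on S \<phi>"
    and u': "\<And>y. ((\<lambda>y. u y t) has_derivative u' y) (at y)"
    and u'': "\<And>v. ((\<lambda>y. u' y v) has_derivative (\<lambda>w. u'' w v)) (at x)"
    and u_t: "((\<lambda>s. u x s) has_real_derivative a) (at t)"
    and min: "eventually (\<lambda>(y, s). \<phi> x t - u x t \<le> \<phi> y s - u y s) (nhds (x, t))"
  obtains \<phi>'' where "bilinear \<phi>''" "hess \<phi> x t = bilinear_matrix \<phi>''"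
    "transpose (hess \<phi> x t) = hess \<phi> x t" "dtime \<phi> x t = a" "grad \<phi> x t = grad u x t"
    "\<And>w. u'' w w \<le> \<phi>'' w w"
proof -
  obtain \<phi>' \<phi>'' where \<phi>': "\<And>y. (y, t) \<in> S \<Longrightarrow> ((\<lambda>y. \<phi> y t) has_derivative \<phi>' y) (at y)"
    and \<phi>'': "\<And>v. ((\<lambda>y. \<phi>' y v) has_derivative (\<lambda>w. \<phi>'' w v)) (at x)" and "bilinear \<phi>''"
    using C2_on_spatial_derivatives[OF S(2,3)] by blast
  have U: "open {y. (y, t) \<in> S}" "x \<in> {y. (y, t) \<in> S}" using open_slice[OF S(1)] S(2) by blast+
  have "\<And>y. y \<in> {y. (y, t) \<in> S} \<Longrightarrow> ((\<lambda>y. \<phi> y t) has_derivative \<phi>' y) (at y)" using \<phi>' by blast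
  note conditions = local_min_of_difference[where u=\<phi> and \<phi>=u and t=t,
      OF U this \<phi>'' u' u'' C2_on_time_derivative[OF S(2,3)] u_t min]
  have "grad \<phi> x t = grad u x t"
    using grad_eq[where u=\<phi>, OF \<phi>'[OF S(2)]] grad_eq[where u=u, OF u'] conditions(2) by simp
  then show ?thesis
    using that[OF \<open>bilinear \<phi>''\<close>] C2_on_hess[where \<phi>=\<phi> and t=t, OF S(1,2) \<phi>' \<phi>''] conditions(1,3)
    by simp
qed

section \<open>Viscosity sub- and supersolutions\<close>

lemma open_time_positive: "open {(x :: 'a::topological_space, t :: real). 0 < t}"
proof -
  have "{(x :: 'a, t :: real). 0 < t} = {z. 0 < snd z}" by auto
  then show ?thesis by (simp add: open_Collect_less continuous_on_const continuous_on_snd)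
qed

lemma open_horizontal_cylinder: "open {(x :: real^('m::finite option), t :: real). norm (hpart x) < \<rho> \<and> 0 < t}"
proof -
  have "{(x :: real^('m option), t :: real). norm (hpart x) < \<rho> \<and> 0 < t}
      = {z. norm (hpart (fst z)) < \<rho>} \<inter> {z. 0 < snd z}" by auto
  then show ?thesis by (simp add: open_Int open_Collect_less continuous_intros)
qed

lemma G_lower_le_barrier:
  fixes B :: "real^'m::finite^'m"
  assumes B: "transpose B = - B" "invertible B" "matrix_inv B = - B"
    and x: "norm (hpart x) < sqrt (- c / (4 * real (CARD('m) + 1)))"
    and "0 < t" "transpose A = A" and p: "p v* sigma B x = Xh B (barrier c r) x t"
    and A: "\<And>v. v \<bullet> (X2h B (barrier c r) x t *v v) \<le> v \<bullet> ((transpose (sigma B x) ** A ** sigma B x) *v v)"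
  shows "G_lower B (x, t, p, A) \<le> - c"
proof (cases "hpart x = 0")
  case False
  note Xh_nonzero = Fmc_barrier(1)[OF B False]
  have "G_lower B (x, t, p, A) \<le> Fmc (Xh B (barrier c r) x t) (transpose (sigma B x) ** A ** sigma B x)"
    using G_lower_le_Gop[of "(x, t, p, A)" B] assms(5,6) Xh_nonzero by (simp add: Gdom_def Gop_def p)
  also have "\<dots> \<le> Fmc (Xh B (barrier c r) x t) (X2h B (barrier c r) x t)"
    by (rule Fmc_antimono[OF A Xh_nonzero])
  also have "\<dots> = 4 * real (CARD('m) + 1) * (norm (hpart x))\<^sup>2"
    by (rule Fmc_barrier(2)[OF B False])
  also have "\<dots> < - c"
  proof -
    have "sqrt ((norm (hpart x))\<^sup>2) < sqrt (- c / (4 * real (CARD('m) + 1)))" using x by simp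
    then have "(norm (hpart x))\<^sup>2 < - c / (4 * real (CARD('m) + 1))"
      by (simp only: real_sqrt_less_iff)
    then show ?thesis by (simp add: field_simps)
  qed
  finally show ?thesis by simp
next
  case True
  have "v \<bullet> (X2h B (barrier c r) x t *v v) = 0" for v
    by (simp add: X2h_def hess_barrier inner_sandwich_bilinear_matrix bilinear_barrier_Dxx
        barrier_Dxx_def vpart_sigma_mult True)
  then have "0 \<le> v \<bullet> ((transpose (sigma B x) ** A ** sigma B x) *v v)" for v using A[of v] by simp
  then have "G_lower B (x, t, p, A) \<le> 0" using assms(5,6) by (intro G_lower_nonpos_if_psd)
  moreover have "0 < sqrt (- c / (4 * real (CARD('m) + 1)))"
    using x norm_ge_zero[of "hpart x"] by linarith
  then have "0 < - c" by (simp add: divide_less_0_iff add_pos_nonneg)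
  ultimately show ?thesis by simp
qed

lemma visc_super_barrier:
  fixes B :: "real^'m::finite^'m"
  assumes "0 \<le> c"
  shows "visc_super B (barrier c r) {(x, t). 0 < t}"
  unfolding visc_super_def
proof (intro conjI allI impI)
  let ?S = "{(x :: real^('m option), t :: real). 0 < t}"
  show "lsc_on ?S (barrier c r)" by (rule continuous_on_imp_lsc_on[OF continuous_on_barrier])
  fix \<phi> x t
  assume "C2_on ?S \<phi> \<and> (x, t) \<in> ?S \<and> local_min_on ?S (\<lambda>(y, s). barrier c r y s - \<phi> y s) (x, t)"
  then have C2: "C2_on ?S \<phi>" and xt: "(x, t) \<in> ?S"
    and lmin: "local_min_on ?S (\<lambda>(y, s). barrier c r y s - \<phi> y s) (x, t)" by auto
  from local_min_on_open_imp_eventually[OF open_time_positive xt lmin]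
  have "eventually (\<lambda>(y, s). barrier c r x t - \<phi> x t \<le> barrier c r y s - \<phi> y s) (nhds (x, t))"
    by (simp add: case_prod_unfold)
  from C2_touching_from_below[where u="barrier c r", OF open_time_positive xt C2
      has_derivative_barrier has_derivative_barrier_Dx has_real_derivative_barrier_time this]
  obtain \<phi>'' where "bilinear \<phi>''" "hess \<phi> x t = bilinear_matrix \<phi>''"
    and sym: "transpose (hess \<phi> x t) = hess \<phi> x t" and "dtime \<phi> x t = c"
    and le: "\<And>w. \<phi>'' w w \<le> barrier_Dxx x w w" by blast
  have "v \<bullet> ((transpose (sigma B x) ** hess \<phi> x t ** sigma B x) *v v) \<le> 0" for v
    using le[of "sigma B x *v v"] barrier_Dxx_nonpos[of x "sigma B x *v v"]
    by (simp add: \<open>hess \<phi> x t = _\<close> inner_sandwich_bilinear_matrix[OF \<open>bilinear \<phi>''\<close>])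
  then have "0 \<le> G_upper B (x, t, grad \<phi> x t, hess \<phi> x t)"
    using xt sym by (intro G_upper_nonneg_if_nsd) auto
  then show "0 \<le> dtime \<phi> x t + G_upper B (x, t, grad \<phi> x t, hess \<phi> x t)"
    using \<open>dtime \<phi> x t = c\<close> assms by simp
qed

lemma visc_sub_barrier:
  fixes B :: "real^'m::finite^'m"
  assumes B: "transpose B = - B" "invertible B" "matrix_inv B = - B" and "c < 0"
  shows "visc_sub B (barrier c r) {(x, t). norm (hpart x) < sqrt (- c / (4 * real (CARD('m) + 1))) \<and> 0 < t}"
  unfolding visc_sub_def
proof (intro conjI allI impI)
  let ?S = "{(x :: real^('m option), t :: real). norm (hpart x) < sqrt (- c / (4 * real (CARD('m) + 1))) \<and> 0 < t}"
  show "usc_on ?S (barrier c r)" by (rule continuous_on_imp_usc_on[OF continuous_on_barrier])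
  fix \<phi> x t
  assume "C2_on ?S \<phi> \<and> (x, t) \<in> ?S \<and> local_max_on ?S (\<lambda>(y, s). barrier c r y s - \<phi> y s) (x, t)"
  then have C2: "C2_on ?S \<phi>" and xt: "(x, t) \<in> ?S"
    and lmax: "local_max_on ?S (\<lambda>(y, s). barrier c r y s - \<phi> y s) (x, t)" by auto
  from local_min_on_open_imp_eventually[OF open_horizontal_cylinder xt
      local_max_on_imp_local_min_on_uminus[OF lmax]]
  have "eventually (\<lambda>(y, s). \<phi> x t - barrier c r x t \<le> \<phi> y s - barrier c r y s) (nhds (x, t))"
    by (elim eventually_mono) (auto simp: case_prod_unfold)
  from C2_touching_from_above[where u="barrier c r", OF open_horizontal_cylinder xt C2
      has_derivative_barrier has_derivative_barrier_Dx has_real_derivative_barrier_time this]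
  obtain \<phi>'' where "bilinear \<phi>''" "hess \<phi> x t = bilinear_matrix \<phi>''"
    and sym: "transpose (hess \<phi> x t) = hess \<phi> x t" and "dtime \<phi> x t = c"
    and grad: "grad \<phi> x t = grad (barrier c r) x t" and le: "\<And>w. barrier_Dxx x w w \<le> \<phi>'' w w"
    by blast
  have "v \<bullet> (X2h B (barrier c r) x t *v v) \<le> v \<bullet> ((transpose (sigma B x) ** hess \<phi> x t ** sigma B x) *v v)"
    for v
    using le[of "sigma B x *v v"]
    by (simp add: X2h_def hess_barrier \<open>hess \<phi> x t = _\<close> inner_sandwich_bilinear_matrix
        bilinear_barrier_Dxx \<open>bilinear \<phi>''\<close>)
  then have "G_lower B (x, t, grad \<phi> x t, hess \<phi> x t) \<le> - c"
    using xt sym by (intro G_lower_le_barrier[OF B]) (auto simp: grad Xh_def)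
  then show "dtime \<phi> x t + G_lower B (x, t, grad \<phi> x t, hess \<phi> x t) \<le> 0"
    using \<open>dtime \<phi> x t = c\<close> by simp
qed

theorem mainTheorem6:
  fixes B :: "real^'m::finite^'m" and c r :: real
  assumes m2: "CARD('m) \<ge> 2"
    and B_skew: "transpose B = - B"
    and B_inv: "invertible B" "matrix_inv B = - B"
  defines "u \<equiv> (\<lambda>(x::real^('m option)) (t::real).
              c * t - ((norm (hpart x)) ^ 4 + 4 * (vpart x) ^ 2) + r)"
  shows "(\<forall>x t. hpart x \<noteq> 0 \<longrightarrow>
            dtime u x t - trace (X2h B u x t - (X2h B u x t ** outer (Xh B u x t)) /\<^sub>R (norm (Xh B u x t))\<^sup>2)
              = c + 4 * real (CARD('m) + 1) * (norm (hpart x))\<^sup>2)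
       \<and> (c \<ge> 0 \<longrightarrow> visc_super B u {(x, t). 0 < t})
       \<and> (c < 0 \<longrightarrow> visc_sub B u {(x, t). norm (hpart x) < sqrt (- c / (4 * real (CARD('m) + 1))) \<and> 0 < t})"
proof -
  have u: "u = barrier c r" unfolding u_def barrier_def by simp
  have "dtime u x t - trace (X2h B u x t - (X2h B u x t ** outer (Xh B u x t)) /\<^sub>R (norm (Xh B u x t))\<^sup>2)
      = c + 4 * real (CARD('m) + 1) * (norm (hpart x))\<^sup>2" if "hpart x \<noteq> 0" for x t
    unfolding u trace_sub_outer_eq_Fmc Fmc_barrier(2)[OF B_skew B_inv that]
    by (simp add: dtime_eq[OF has_real_derivative_barrier_time])
  then show ?thesis
    unfolding u using visc_super_barrier visc_sub_barrier[OF B_skew B_inv] by blast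
qed

end
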